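(* Let $F$ be a $\theta\mathrm{DMBPP}(\lambda,\Psi_\eta,\mathcal{V},\Psi_\theta)$, defined such that $\mathcal{V}$ is a set of equicontinuous functions and such that for every $j\ge1$ the stochastic process $\eta_j$ is a.s. continuous. Then for every sequence $\{x_l\}_{l\ge0}\subseteq\mathcal{X}$ with $\lim_{l\to\infty}x_l=x_0$, $$\lim_{l\to\infty}\sup_{B\in\mathcal{B}(\Delta_m)}|F_{x_l}(B)-F_{x_0}(B)|=0\quad\text{a.s.},$$ i.e., $F_{x_l}$ converges a.s. in total variation norm to $F_{x_0}$.
   Context: Let $m,p\ge 1$. $\Delta_m=\{y\in[0,1]^m:\sum_{i=1}^m y_i\le 1\}$, $\Delta_m^0=\{y\in\Delta_m: y_i>0\ \forall i\}$, $\mathcal{B}(\Delta_m)$ its Borel sets. $\mathrm{dir}(y\mid\alpha)$, $\alpha=(\alpha_1,\dots,\alpha_{m+1})$, is the Dirichlet density $\frac{\Gamma(\sum_i\alpha_i)}{\prod_i\Gamma(\alpha_i)}\prod_{i=1}^m y_i^{\alpha_i-1}(1-\sum_i y_i)^{\alpha_{m+1}-1}$. For $k\in\mathbb{N}$, $\alpha(k,\mathbf{j})=(j_1,\dots,j_m,k+m-\|\mathbf{j}\|_1)$, $\lceil k\theta\rceil=(\lceil k\theta_1\rceil,\dots,\lceil k\theta_m\rceil)$. $\mathcal{X}\subseteq\mathbb{R}^p$. $\mathcal{V}=\{v_x:x\in\mathcal{X}\}$: known continuous functions (described as bijective) $v_x:\mathbb{R}\to[0,1]$ with $x\mapsto v_x(a)$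 continuous for every $a$; "$\mathcal{V}$ is a set of equicontinuous functions" means $\{x\mapsto v_x(a):a\in\mathbb{R}\}$ is equicontinuous. $\theta\mathrm{DMBPP}(\lambda,\Psi_\eta,\mathcal{V},\Psi_\theta)$: $\eta_j$, $j\ge1$, i.i.d. real-valued stochastic processes on $\mathcal{X}$ (law indexed by finite-dimensional $\Psi_\eta$); $\theta_j$, $j\ge1$, i.i.d. $\Delta_m^0$-valued random vectors (law indexed by $\Psi_\theta$); $k\in\mathbb{N}$ random (law indexed by $\lambda$); $F_x$ is the probability measure on $\Delta_m$ with Lebesgue density $f_x(\cdot)=\sum_{j\ge1}w_j(x)\mathrm{dir}(\cdot\mid\alpha(k,\lceil k\theta_j\rceil))$, $w_j(x)=V_j(x)\prod_{l<j}(1-V_l(x))$, $V_j(x)=v_x(\eta_j(x))$. The weights sum to one a.s. *)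

theory Defs
  imports "HOL-Probability.Probability"
begin

definition dm_simplex :: "(real ^ 'm::finite) set" where
  "dm_simplex = {y. (\<forall>i. 0 \<le> y $ i \<and> y $ i \<le> 1) \<and> (\<Sum>i\<in>UNIV. y $ i) \<le> 1}"

definition dm_simplex0 :: "(real ^ 'm::finite) set" where
  "dm_simplex0 = {y \<in> dm_simplex. \<forall>i. 0 < y $ i}"

text \<open>Dirichlet density dir(y | a_1..a_m, a_last), for positive integer parameters
  (the only ones occurring below); exponents a - 1 are natural numbers.\<close>
definition dir_dens :: "('m::finite \<Rightarrow> nat) \<Rightarrow> nat \<Rightarrow> real ^ 'm \<Rightarrow> real" where
  "dir_dens a al y =
     Gamma (real ((\<Sum>i\<in>UNIV. a i) + al)) / ((\<Prod>i\<in>UNIV. Gamma (real (a i))) * Gamma (real al))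
     * (\<Prod>i\<in>UNIV. (y $ i) ^ (a i - 1)) * (1 - (\<Sum>i\<in>UNIV. y $ i)) ^ (al - 1)"

text \<open>alpha(k, ceil(k theta)) = (ceil(k theta_1), ..., ceil(k theta_m), k + m - sum_i ceil(k theta_i)).\<close>
definition ceil_vec :: "nat \<Rightarrow> real ^ 'm \<Rightarrow> ('m::finite \<Rightarrow> nat)" where
  "ceil_vec k th = (\<lambda>i. nat \<lceil>real k * th $ i\<rceil>)"

definition alpha_last :: "nat \<Rightarrow> ('m::finite \<Rightarrow> nat) \<Rightarrow> nat" where
  "alpha_last k j = k + CARD('m) - (\<Sum>i\<in>UNIV. j i)"

text \<open>Stick-breaking: V_j(x) = v_x(eta_j(x)), w_j(x) = V_j(x) prod_{l<j} (1 - V_l(x)).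
  Indices start at 0 (relabelling of j >= 1).\<close>
definition sb_V :: "('x \<Rightarrow> real \<Rightarrow> real) \<Rightarrow> (nat \<Rightarrow> 'w \<Rightarrow> 'x \<Rightarrow> real) \<Rightarrow> nat \<Rightarrow> 'x \<Rightarrow> 'w \<Rightarrow> real" where
  "sb_V v eta j x \<omega> = v x (eta j \<omega> x)"

definition sb_w :: "('x \<Rightarrow> real \<Rightarrow> real) \<Rightarrow> (nat \<Rightarrow> 'w \<Rightarrow> 'x \<Rightarrow> real) \<Rightarrow> nat \<Rightarrow> 'x \<Rightarrow> 'w \<Rightarrow> real" where
  "sb_w v eta j x \<omega> = sb_V v eta j x \<omega> * (\<Prod>l<j. 1 - sb_V v eta l x \<omega>)"

definition dmbpp_dens ::
  "('x \<Rightarrow> real \<Rightarrow> real) \<Rightarrow> (nat \<Rightarrow> 'w \<Rightarrow> 'x \<Rightarrow> real) \<Rightarrow> (nat \<Rightarrow> 'w \<Rightarrow> real ^ 'm::finite)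
   \<Rightarrow> ('w \<Rightarrow> nat) \<Rightarrow> 'x \<Rightarrow> 'w \<Rightarrow> real ^ 'm \<Rightarrow> real" where
  "dmbpp_dens v eta theta k x \<omega> y =
     indicator dm_simplex y *
     (\<Sum>j. sb_w v eta j x \<omega> *
        dir_dens (ceil_vec (k \<omega>) (theta j \<omega>))
                 (alpha_last (k \<omega>) (ceil_vec (k \<omega>) (theta j \<omega>))) y)"

definition dmbpp_F ::
  "('x \<Rightarrow> real \<Rightarrow> real) \<Rightarrow> (nat \<Rightarrow> 'w \<Rightarrow> 'x \<Rightarrow> real) \<Rightarrow> (nat \<Rightarrow> 'w \<Rightarrow> real ^ 'm::finite)
   \<Rightarrow> ('w \<Rightarrow> nat) \<Rightarrow> 'x \<Rightarrow> 'w \<Rightarrow> (real ^ 'm) measure" where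
  "dmbpp_F v eta theta k x \<omega> = density lborel (\<lambda>y. ennreal (dmbpp_dens v eta theta k x \<omega> y))"

end

theory Submission
  imports Defs
begin

(* Almost surely, every eta_j is continuous and the weights at every x_l sum to one; fix such an
   outcome. Equicontinuity of V and continuity of eta_j give w_j(x_l) -> w_j(x_0) for each j, and
   Scheffe's lemma for probability sequences upgrades this to convergence of the weights in l1.
   For fixed k the parameters ceil(k theta_j) range over a finite set, so all Dirichlet kernels
   that occur are bounded on the simplex by one constant C. Hence |f_{x_l} - f_{x_0}| is at most
   C |w(x_l) - w(x_0)|_1 on Delta_m, and so is every |F_{x_l}(B) - F_{x_0}(B)| up to the factor
   Leb(Delta_m). *)

lemma Scheffe_series:
  fixes a :: "nat \<Rightarrow> nat \<Rightarrow> real" and b :: "nat \<Rightarrow> real"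
  assumes a_nonneg: "\<And>l j. 0 \<le> a l j" and b_nonneg: "\<And>j. 0 \<le> b j"
    and a_sums: "\<And>l. a l sums 1" and b_sums: "b sums 1"
    and a_lim: "\<And>j. (\<lambda>l. a l j) \<longlonglongrightarrow> b j"
  shows "(\<lambda>l. \<Sum>j. \<bar>a l j - b j\<bar>) \<longlonglongrightarrow> 0"
proof -
  define p where "p l j = max (b j - a l j) 0" for l j
  have b_summable: "summable b"
    using b_sums by (simp add: sums_iff)
  have p_summable: "summable (p l)" for l
    by (rule summable_comparison_test[OF _ b_summable])
       (auto simp: p_def a_nonneg b_nonneg)
  \<comment> \<open>Since both sequences have sum 1, the positive part of b - a l carries half the l1 distance.\<close>
  have "(\<lambda>j. \<bar>a l j - b j\<bar>) sums (2 * (\<Sum>j. p l j) + (1 - 1))" for l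
  proof -
    have "(\<lambda>j. 2 * p l j + (a l j - b j)) sums (2 * (\<Sum>j. p l j) + (1 - 1))"
      by (intro sums_add sums_mult sums_diff a_sums b_sums summable_sums p_summable)
    moreover have "2 * p l j + (a l j - b j) = \<bar>a l j - b j\<bar>" for j
      by (auto simp: p_def max_def)
    ultimately show ?thesis by simp
  qed
  then have l1_eq: "(\<Sum>j. \<bar>a l j - b j\<bar>) = 2 * (\<Sum>j. p l j)" for l
    by (simp add: sums_iff)
  have "(\<lambda>l. \<Sum>j. p l j) \<longlonglongrightarrow> (\<Sum>j. max (b j - b j) 0)"
  proof (rule tannerys_theorem[THEN conjunct2, THEN conjunct2])
    show "(\<lambda>l. p l j) \<longlonglongrightarrow> max (b j - b j) 0" for j
      unfolding p_def by (intro tendsto_intros a_lim)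
    show "\<forall>\<^sub>F (j, l) in at_top \<times>\<^sub>F sequentially. norm (p l j) \<le> b j"
      by (intro always_eventually) (auto simp: p_def a_nonneg b_nonneg)
  qed (use b_summable in auto)
  then show ?thesis
    by (simp add: l1_eq tendsto_mult_right_zero)
qed

lemma summable_mult_bounded:
  fixes a d :: "nat \<Rightarrow> real"
  assumes "summable (\<lambda>j. \<bar>a j\<bar>)" and "\<And>j. \<bar>d j\<bar> \<le> C"
  shows "summable (\<lambda>j. a j * d j)" and "\<bar>\<Sum>j. a j * d j\<bar> \<le> C * (\<Sum>j. \<bar>a j\<bar>)"
proof -
  have bound: "norm (a j * d j) \<le> C * \<bar>a j\<bar>" for j
    using mult_left_mono[OF assms(2)[of j] abs_ge_zero[of "a j"]] by (simp add: abs_mult mult.commute)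
  have summable_C: "summable (\<lambda>j. C * \<bar>a j\<bar>)"
    using assms(1) by (rule summable_mult)
  have norm_summable: "summable (\<lambda>j. norm (a j * d j))"
    by (rule summable_comparison_test[OF _ summable_C]) (use bound in auto)
  then show "summable (\<lambda>j. a j * d j)"
    by (rule summable_norm_cancel)
  have "\<bar>\<Sum>j. a j * d j\<bar> \<le> (\<Sum>j. norm (a j * d j))"
    using summable_norm[OF norm_summable] by simp
  also have "\<dots> \<le> (\<Sum>j. C * \<bar>a j\<bar>)"
    by (rule suminf_le[OF bound norm_summable summable_C])
  also have "\<dots> = C * (\<Sum>j. \<bar>a j\<bar>)"
    using suminf_mult[OF assms(1)] by simp
  finally show "\<bar>\<Sum>j. a j * d j\<bar> \<le> C * (\<Sum>j. \<bar>a j\<bar>)" .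
qed

lemma tendsto_equicontinuous_comp:
  fixes v :: "'a::metric_space \<Rightarrow> real \<Rightarrow> real" and e :: "'a \<Rightarrow> real"
  assumes xs_in: "\<And>l. xs l \<in> X" and x0: "x0 \<in> X" and xs_lim: "xs \<longlonglongrightarrow> x0"
    and e_cont: "continuous_on X e" and v_cont: "isCont (v x0) (e x0)"
    and equicont: "\<And>r. r > 0 \<Longrightarrow> \<exists>d>0. \<forall>a. \<forall>y\<in>X. dist y x0 < d \<longrightarrow> \<bar>v y a - v x0 a\<bar> < r"
  shows "(\<lambda>l. v (xs l) (e (xs l))) \<longlonglongrightarrow> v x0 (e x0)"
proof -
  have "(\<lambda>l. e (xs l)) \<longlonglongrightarrow> e x0"
    by (rule continuous_on_tendsto_compose[OF e_cont xs_lim x0]) (use xs_in in auto)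
  then have fixed_lim: "(\<lambda>l. v x0 (e (xs l))) \<longlonglongrightarrow> v x0 (e x0)"
    by (rule isCont_tendsto_compose[OF v_cont])
  have uniform_lim: "(\<lambda>l. v (xs l) (e (xs l)) - v x0 (e (xs l))) \<longlonglongrightarrow> 0"
  proof (rule LIMSEQ_I)
    fix r :: real assume "0 < r"
    then obtain d where "d > 0" and d: "\<And>a y. y \<in> X \<Longrightarrow> dist y x0 < d \<Longrightarrow> \<bar>v y a - v x0 a\<bar> < r"
      using equicont by meson
    then obtain L where L: "\<And>l. l \<ge> L \<Longrightarrow> dist (xs l) x0 < d"
      using xs_lim unfolding lim_sequentially by blast
    show "\<exists>L. \<forall>l\<ge>L. norm (v (xs l) (e (xs l)) - v x0 (e (xs l)) - 0) < r"
      using L d xs_in by (intro exI[of _ L]) auto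
  qed
  show ?thesis
    using tendsto_add[OF uniform_lim fixed_lim] by simp
qed

lemma measure_density_eq_set_integral:
  fixes f :: "'a \<Rightarrow> real"
  assumes f: "integrable M f" and B: "B \<in> sets M"
  shows "measure (density M (\<lambda>y. ennreal (f y))) B = (LINT y:B|M. max (f y) 0)"
proof -
  have integrable_part: "integrable M (\<lambda>y. indicator B y *\<^sub>R max (f y) 0)"
    using f B by (intro integrable_mult_indicator integrable_max) auto
  have "emeasure (density M (\<lambda>y. ennreal (f y))) B = (\<integral>\<^sup>+ y. ennreal (f y) * indicator B y \<partial>M)"
    using f B by (simp add: emeasure_density)
  also have "\<dots> = (\<integral>\<^sup>+ y. ennreal (indicator B y *\<^sub>R max (f y) 0) \<partial>M)"
    by (intro nn_integral_cong) (auto simp: indicator_def ennreal_max_0)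
  also have "\<dots> = ennreal (LINT y:B|M. max (f y) 0)"
    unfolding set_lebesgue_integral_def
    by (rule nn_integral_eq_integral[OF integrable_part]) (auto simp: indicator_def)
  finally show ?thesis
    unfolding measure_def set_lebesgue_integral_def by (simp add: integral_nonneg_AE indicator_def)
qed

lemma abs_measure_density_diff_le:
  fixes f g :: "'a \<Rightarrow> real"
  assumes f: "integrable M f" and g: "integrable M g" and B: "B \<in> sets M"
  shows "\<bar>measure (density M (\<lambda>y. ennreal (f y))) B - measure (density M (\<lambda>y. ennreal (g y))) B\<bar>
         \<le> (\<integral>y. \<bar>f y - g y\<bar> \<partial>M)"
proof -
  have positive_part: "set_integrable M B (\<lambda>y. max (h y) 0)" if "integrable M h" for h :: "'a \<Rightarrow> real"
    unfolding set_integrable_def using that B by (intro integrable_mult_indicator integrable_max) auto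
  have "\<bar>measure (density M (\<lambda>y. ennreal (f y))) B - measure (density M (\<lambda>y. ennreal (g y))) B\<bar>
     = \<bar>LINT y:B|M. max (f y) 0 - max (g y) 0\<bar>"
    using f g B by (simp add: measure_density_eq_set_integral set_integral_diff positive_part)
  also have "\<dots> \<le> (LINT y|M. \<bar>indicator B y * (max (f y) 0 - max (g y) 0)\<bar>)"
    unfolding set_lebesgue_integral_def using integral_norm_bound by simp
  also have "\<dots> \<le> (\<integral>y. \<bar>f y - g y\<bar> \<partial>M)"
    using integrable_mult_indicator[OF B, of "\<lambda>y. max (f y) 0 - max (g y) 0"] f g
    by (intro integral_mono) (auto simp: indicator_def)
  finally show ?thesis .
qed

definition mixture_dens :: "'a set \<Rightarrow> (nat \<Rightarrow> 'a \<Rightarrow> real) \<Rightarrow> (nat \<Rightarrow> real) \<Rightarrow> 'a \<Rightarrow> real" where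
  "mixture_dens S d w y = indicator S y * (\<Sum>j. w j * d j y)"

lemma borel_measurable_mixture_dens:
  assumes "S \<in> sets M" and "\<And>j. d j \<in> borel_measurable M"
  shows "mixture_dens S d w \<in> borel_measurable M"
  unfolding mixture_dens_def using assms by measurable

context
  fixes S :: "'a set" and d :: "nat \<Rightarrow> 'a \<Rightarrow> real" and C :: real
  assumes d_bounded: "\<And>j y. y \<in> S \<Longrightarrow> \<bar>d j y\<bar> \<le> C"
begin

lemma abs_mixture_dens_le:
  assumes "summable (\<lambda>j. \<bar>w j\<bar>)"
  shows "\<bar>mixture_dens S d w y\<bar> \<le> C * (\<Sum>j. \<bar>w j\<bar>) * indicator S y"
  using summable_mult_bounded(2)[OF assms, of "\<lambda>j. d j y" C] d_bounded[of y]
  by (cases "y \<in> S") (simp_all add: mixture_dens_def)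

lemma mixture_dens_diff:
  assumes "summable (\<lambda>j. \<bar>v j\<bar>)" and "summable (\<lambda>j. \<bar>w j\<bar>)"
  shows "mixture_dens S d v y - mixture_dens S d w y = mixture_dens S d (\<lambda>j. v j - w j) y"
proof (cases "y \<in> S")
  case True
  then show ?thesis
    using suminf_diff[OF summable_mult_bounded(1)[OF assms(1), of "\<lambda>j. d j y", OF d_bounded[OF True]]
        summable_mult_bounded(1)[OF assms(2), of "\<lambda>j. d j y", OF d_bounded[OF True]]]
    by (simp add: mixture_dens_def left_diff_distrib)
qed (simp add: mixture_dens_def)

lemma integrable_mixture_dens:
  assumes S: "S \<in> sets M" "emeasure M S < \<infinity>" and d_meas: "\<And>j. d j \<in> borel_measurable M"
    and w: "summable (\<lambda>j. \<bar>w j\<bar>)"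
  shows "integrable M (mixture_dens S d w)"
proof (rule Bochner_Integration.integrable_bound)
  show "integrable M (\<lambda>y. C * (\<Sum>j. \<bar>w j\<bar>) * indicator S y)"
    using S by simp
  show "AE y in M. norm (mixture_dens S d w y) \<le> norm (C * (\<Sum>j. \<bar>w j\<bar>) * indicator S y)"
    using abs_mixture_dens_le[OF w] by (auto intro: order_trans[OF _ abs_ge_self])
qed (rule borel_measurable_mixture_dens[OF S(1) d_meas])

lemma abs_measure_mixture_diff_le:
  assumes S: "S \<in> sets M" "emeasure M S < \<infinity>" and d_meas: "\<And>j. d j \<in> borel_measurable M"
    and v: "summable (\<lambda>j. \<bar>v j\<bar>)" and w: "summable (\<lambda>j. \<bar>w j\<bar>)" and B: "B \<in> sets M"
  shows "\<bar>measure (density M (\<lambda>y. ennreal (mixture_dens S d v y))) B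
          - measure (density M (\<lambda>y. ennreal (mixture_dens S d w y))) B\<bar>
         \<le> C * (\<Sum>j. \<bar>v j - w j\<bar>) * measure M S"
proof -
  have vw: "summable (\<lambda>j. \<bar>v j - w j\<bar>)"
    by (rule summable_comparison_test[OF _ summable_add[OF v w]]) auto
  have "\<bar>measure (density M (\<lambda>y. ennreal (mixture_dens S d v y))) B
          - measure (density M (\<lambda>y. ennreal (mixture_dens S d w y))) B\<bar>
        \<le> (\<integral>y. \<bar>mixture_dens S d v y - mixture_dens S d w y\<bar> \<partial>M)"
    using integrable_mixture_dens[OF S d_meas v] integrable_mixture_dens[OF S d_meas w] B
    by (rule abs_measure_density_diff_le)
  also have "\<dots> \<le> (\<integral>y. C * (\<Sum>j. \<bar>v j - w j\<bar>) * indicator S y \<partial>M)"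
    using integrable_abs[OF integrable_mixture_dens[OF S d_meas vw]] S
    by (intro integral_mono) (auto simp: mixture_dens_diff[OF v w] abs_mixture_dens_le[OF vw])
  also have "\<dots> = C * (\<Sum>j. \<bar>v j - w j\<bar>) * measure M S"
    using S by simp
  finally show ?thesis .
qed

lemma total_variation_mixture_tendsto:
  fixes W :: "nat \<Rightarrow> nat \<Rightarrow> real"
  assumes S: "S \<in> sets M" "emeasure M S < \<infinity>" and d_meas: "\<And>j. d j \<in> borel_measurable M"
    and W_nonneg: "\<And>l j. 0 \<le> W l j" and W_sums: "\<And>l. W l sums 1"
    and q_sums: "q sums 1" and W_lim: "\<And>j. (\<lambda>l. W l j) \<longlonglongrightarrow> q j"
  shows "(\<lambda>l. SUP B\<in>{B \<in> sets M. B \<subseteq> S}.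
            \<bar>measure (density M (\<lambda>y. ennreal (mixture_dens S d (W l) y))) B
             - measure (density M (\<lambda>y. ennreal (mixture_dens S d q y))) B\<bar>) \<longlonglongrightarrow> 0"
    (is "(\<lambda>l. SUP B\<in>?A. ?\<delta> l B) \<longlonglongrightarrow> 0")
proof -
  have q_nonneg: "0 \<le> q j" for j
    by (rule LIMSEQ_le_const[OF W_lim]) (use W_nonneg in auto)
  have W_summable: "summable (\<lambda>j. \<bar>W l j\<bar>)" for l
    using W_sums[of l] W_nonneg by (simp add: sums_iff)
  have q_summable: "summable (\<lambda>j. \<bar>q j\<bar>)"
    using q_sums q_nonneg by (simp add: sums_iff)
  define bound where "bound l = C * (\<Sum>j. \<bar>W l j - q j\<bar>) * measure M S" for l
  have "(\<lambda>l. \<Sum>j. \<bar>W l j - q j\<bar>) \<longlonglongrightarrow> 0"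
    using W_nonneg q_nonneg W_sums q_sums W_lim by (rule Scheffe_series)
  then have bound_lim: "bound \<longlonglongrightarrow> 0"
    unfolding bound_def using tendsto_mult_right_zero tendsto_mult_left_zero by blast
  have \<delta>_le: "?\<delta> l B \<le> bound l" if "B \<in> sets M" for l B
    unfolding bound_def by (rule abs_measure_mixture_diff_le[OF S d_meas W_summable q_summable that])
  have "(SUP B\<in>?A. ?\<delta> l B) \<le> bound l" for l
    by (rule cSUP_least) (auto intro: \<delta>_le)
  moreover have "0 \<le> (SUP B\<in>?A. ?\<delta> l B)" for l
  proof -
    have "?\<delta> l {} \<le> (SUP B\<in>?A. ?\<delta> l B)"
      by (rule cSUP_upper) (auto intro!: bdd_aboveI2 \<delta>_le)
    then show ?thesis
      by simp
  qed
  ultimately show ?thesis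
    by (intro tendsto_sandwich[OF _ _ tendsto_const bound_lim] always_eventually allI)
qed

end

lemma compact_dm_simplex: "compact (dm_simplex :: (real ^ 'm::finite) set)"
proof -
  have "dm_simplex \<subseteq> cbox (0::real^'m) 1"
    by (auto simp: dm_simplex_def mem_box_cart)
  then have "bounded (dm_simplex :: (real ^ 'm) set)"
    using bounded_cbox bounded_subset by blast
  moreover have "closed (dm_simplex :: (real ^ 'm) set)"
  proof -
    have "dm_simplex = (\<Inter>i. {y::real^'m. 0 \<le> y $ i} \<inter> {y. y $ i \<le> 1}) \<inter> {y. (\<Sum>i\<in>UNIV. y $ i) \<le> 1}"
      by (auto simp: dm_simplex_def)
    also have "closed \<dots>"
      by (intro closed_Int closed_INT ballI closed_Collect_le continuous_intros)
    finally show ?thesis .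
  qed
  ultimately show ?thesis
    by (simp add: compact_eq_bounded_closed)
qed

definition dir_const :: "('m::finite \<Rightarrow> nat) \<Rightarrow> nat \<Rightarrow> real" where
  "dir_const a al = Gamma (real ((\<Sum>i\<in>UNIV. a i) + al)) / ((\<Prod>i\<in>UNIV. Gamma (real (a i))) * Gamma (real al))"

lemma dir_dens_eq:
  "dir_dens a al y = dir_const a al * (\<Prod>i\<in>UNIV. (y $ i) ^ (a i - 1)) * (1 - (\<Sum>i\<in>UNIV. y $ i)) ^ (al - 1)"
  by (simp add: dir_dens_def dir_const_def)

lemma borel_measurable_dir_dens: "dir_dens a al \<in> borel_measurable borel"
  unfolding dir_dens_eq by (intro borel_measurable_continuous_onI continuous_intros)

lemma abs_dir_dens_le:
  assumes "y \<in> dm_simplex"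
  shows "\<bar>dir_dens a al y\<bar> \<le> \<bar>dir_const a al\<bar>"
proof -
  have y: "\<And>i. 0 \<le> y $ i \<and> y $ i \<le> 1" "0 \<le> 1 - (\<Sum>i\<in>UNIV. y $ i)" "(\<Sum>i\<in>UNIV. y $ i) \<ge> 0"
    using assms by (auto simp: dm_simplex_def sum_nonneg)
  have "(\<Prod>i\<in>UNIV. (y $ i) ^ (a i - 1)) \<in> {0..1}" "(1 - (\<Sum>i\<in>UNIV. y $ i)) ^ (al - 1) \<in> {0..1}"
    using y by (auto intro!: prod_nonneg prod_le_1 power_le_one)
  then have "(\<Prod>i\<in>UNIV. (y $ i) ^ (a i - 1)) * (1 - (\<Sum>i\<in>UNIV. y $ i)) ^ (al - 1) \<in> {0..1}"
    (is "?R \<in> _") by (auto intro: mult_le_one)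
  moreover have "dir_dens a al y = dir_const a al * ?R"
    by (simp add: dir_dens_eq mult.assoc)
  ultimately show ?thesis
    by (metis abs_mult_pos abs_ge_zero atLeastAtMost_iff mult_left_le)
qed

lemma ceil_vec_le:
  assumes "th \<in> dm_simplex0"
  shows "ceil_vec K th i \<le> K"
proof -
  have "real K * th $ i \<le> real K"
    using assms by (auto simp: dm_simplex0_def dm_simplex_def intro: mult_left_le)
  then show ?thesis
    unfolding ceil_vec_def by linarith
qed

lemma dir_dens_ceil_vec_bounded:
  obtains C where "\<And>(th :: real ^ 'm::finite) y. th \<in> dm_simplex0 \<Longrightarrow> y \<in> dm_simplex \<Longrightarrow>
    \<bar>dir_dens (ceil_vec K th) (alpha_last K (ceil_vec K th)) y\<bar> \<le> C"
proof
  define A where "A = {a :: 'm \<Rightarrow> nat. \<forall>i. a i \<le> K}"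
  have "A = PiE UNIV (\<lambda>_. {..K})"
    by (auto simp: A_def PiE_def extensional_def)
  then have "finite A"
    by (auto intro: finite_PiE)
  fix th y :: "real ^ 'm" assume th: "th \<in> dm_simplex0" and y: "y \<in> dm_simplex"
  have "ceil_vec K th \<in> A"
    using ceil_vec_le[OF th] by (simp add: A_def)
  then have const_le: "\<bar>dir_const (ceil_vec K th) (alpha_last K (ceil_vec K th))\<bar>
      \<le> (\<Sum>a\<in>A. \<bar>dir_const a (alpha_last K a)\<bar>)"
    using \<open>finite A\<close> by (intro member_le_sum) auto
  show "\<bar>dir_dens (ceil_vec K th) (alpha_last K (ceil_vec K th)) y\<bar>
      \<le> (\<Sum>a\<in>{a :: 'm \<Rightarrow> nat. \<forall>i. a i \<le> K}. \<bar>dir_const a (alpha_last K a)\<bar>)"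
    using order_trans[OF abs_dir_dens_le[OF y] const_le] by (simp add: A_def)
qed

lemma dmbpp_F_total_variation_tendsto:
  fixes theta :: "nat \<Rightarrow> 'w \<Rightarrow> real ^ 'm::finite"
  assumes theta: "\<And>j. theta j \<omega> \<in> dm_simplex0"
    and w_nonneg: "\<And>l j. 0 \<le> sb_w v eta j (xs l) \<omega>"
    and w_sums: "\<And>l. (\<lambda>j. sb_w v eta j (xs l) \<omega>) sums 1"
    and w_lim: "\<And>j. (\<lambda>l. sb_w v eta j (xs l) \<omega>) \<longlonglongrightarrow> sb_w v eta j (xs 0) \<omega>"
  shows "(\<lambda>l. SUP B\<in>{B \<in> sets borel. B \<subseteq> dm_simplex}.
            \<bar>measure (dmbpp_F v eta theta k (xs l) \<omega>) B
             - measure (dmbpp_F v eta theta k (xs 0) \<omega>) B\<bar>) \<longlonglongrightarrow> 0"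
proof -
  obtain C where C: "\<And>th y. th \<in> (dm_simplex0 :: (real ^ 'm) set) \<Longrightarrow> y \<in> dm_simplex \<Longrightarrow>
      \<bar>dir_dens (ceil_vec (k \<omega>) th) (alpha_last (k \<omega>) (ceil_vec (k \<omega>) th)) y\<bar> \<le> C"
    using dir_dens_ceil_vec_bounded by blast
  have S_sets: "dm_simplex \<in> sets (lborel :: (real ^ 'm) measure)"
    unfolding sets_lborel by (intro borel_closed compact_imp_closed compact_dm_simplex)
  have S_finite: "emeasure lborel (dm_simplex :: (real ^ 'm) set) < \<infinity>"
    using compact_dm_simplex by (rule emeasure_compact_finite)
  show ?thesis
    unfolding dmbpp_F_def dmbpp_dens_def sets_lborel[symmetric]
    by (rule total_variation_mixture_tendsto[unfolded mixture_dens_def, OF _ S_sets S_finite])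
       (auto intro: C theta w_nonneg w_sums w_lim borel_measurable_dir_dens)
qed

theorem theorem6:
  fixes M :: "'w measure"
    and X :: "(real ^ 'p) set"
    and v :: "real ^ 'p \<Rightarrow> real \<Rightarrow> real"
    and eta :: "nat \<Rightarrow> 'w \<Rightarrow> real ^ 'p \<Rightarrow> real"
    and theta :: "nat \<Rightarrow> 'w \<Rightarrow> real ^ 'm::finite"
    and k :: "'w \<Rightarrow> nat"
    and xs :: "nat \<Rightarrow> real ^ 'p"
  assumes P: "prob_space M"
    \<comment> \<open>eta_j: i.i.d. real-valued processes on X\<close>
    and eta_meas: "\<forall>j. \<forall>x\<in>X. (\<lambda>\<omega>. eta j \<omega> x) \<in> borel_measurable M"
    and eta_indep: "prob_space.indep_vars M (\<lambda>_. PiM X (\<lambda>_. borel))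
                      (\<lambda>j \<omega>. restrict (eta j \<omega>) X) UNIV"
    and eta_ident: "\<forall>j. distr M (PiM X (\<lambda>_. borel)) (\<lambda>\<omega>. restrict (eta j \<omega>) X)
                      = distr M (PiM X (\<lambda>_. borel)) (\<lambda>\<omega>. restrict (eta 0 \<omega>) X)"
    \<comment> \<open>theta_j: i.i.d. random vectors with values in Delta_m^0\<close>
    and theta_meas: "\<forall>j. theta j \<in> borel_measurable M"
    and theta_indep: "prob_space.indep_vars M (\<lambda>_. borel) theta UNIV"
    and theta_ident: "\<forall>j. distr M borel (theta j) = distr M borel (theta 0)"
    and theta_val: "\<forall>j. \<forall>\<omega>\<in>space M. theta j \<omega> \<in> dm_simplex0"
    \<comment> \<open>k: random positive integer\<close>
    and k_meas: "k \<in> measurable M (count_space UNIV)"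
    and k_pos: "\<forall>\<omega>\<in>space M. 1 \<le> k \<omega>"
    \<comment> \<open>the family V\<close>
    and v_cont: "\<forall>x\<in>X. continuous_on UNIV (v x)"
    and v_inj: "\<forall>x\<in>X. inj (v x)"
    and v_range: "\<forall>x\<in>X. range (v x) \<subseteq> {0..1}"
    and v_cont_x: "\<forall>a. continuous_on X (\<lambda>x. v x a)"
    and v_equicont: "\<forall>x\<in>X. \<forall>e>0. \<exists>d>0. \<forall>a. \<forall>y\<in>X. dist y x < d \<longrightarrow> \<bar>v y a - v x a\<bar> < e"
    \<comment> \<open>weights sum to one a.s.\<close>
    and w_sum: "\<forall>x\<in>X. AE \<omega> in M. (\<lambda>j. sb_w v eta j x \<omega>) sums 1"
    \<comment> \<open>each eta_j is a.s. continuous\<close>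
    and eta_cont: "\<forall>j. AE \<omega> in M. continuous_on X (eta j \<omega>)"
    \<comment> \<open>the sequence\<close>
    and xs_in: "\<forall>l. xs l \<in> X"
    and xs_lim: "xs \<longlonglongrightarrow> xs 0"
  shows "AE \<omega> in M.
           (\<lambda>l. SUP B\<in>{B \<in> sets borel. B \<subseteq> dm_simplex}.
                   \<bar>measure (dmbpp_F v eta theta k (xs l) \<omega>) B
                    - measure (dmbpp_F v eta theta k (xs 0) \<omega>) B\<bar>) \<longlonglongrightarrow> 0"
proof -
  have "AE \<omega> in M. (\<forall>j. continuous_on X (eta j \<omega>)) \<and> (\<forall>l. (\<lambda>j. sb_w v eta j (xs l) \<omega>) sums 1)"
    using eta_cont w_sum xs_in by (simp add: AE_all_countable)
  with AE_space show ?thesis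
  proof eventually_elim
    case (elim \<omega>)
    then have \<omega>: "\<omega> \<in> space M" and eta_cont_\<omega>: "\<And>j. continuous_on X (eta j \<omega>)" by auto
    have V_range: "sb_V v eta j x \<omega> \<in> {0..1}" if "x \<in> X" for j x
      using v_range that by (simp add: sb_V_def image_subset_iff)
    have V_lim: "(\<lambda>l. sb_V v eta j (xs l) \<omega>) \<longlonglongrightarrow> sb_V v eta j (xs 0) \<omega>" for j
      unfolding sb_V_def
      by (rule tendsto_equicontinuous_comp[where X=X, OF _ _ xs_lim eta_cont_\<omega>])
         (use v_cont v_equicont xs_in in \<open>auto simp: continuous_on_eq_continuous_at\<close>)
    show ?case
    proof (rule dmbpp_F_total_variation_tendsto)
      show "theta j \<omega> \<in> dm_simplex0" for j
        using theta_val \<omega> by blast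
      show "0 \<le> sb_w v eta j (xs l) \<omega>" for l j
        using V_range xs_in by (auto simp: sb_w_def intro!: mult_nonneg_nonneg prod_nonneg)
      show "(\<lambda>j. sb_w v eta j (xs l) \<omega>) sums 1" for l
        using elim by blast
      show "(\<lambda>l. sb_w v eta j (xs l) \<omega>) \<longlonglongrightarrow> sb_w v eta j (xs 0) \<omega>" for j
        unfolding sb_w_def by (intro tendsto_intros V_lim)
    qed
  qed
qed

end
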